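(* Let $N\ge2$, $p\in(1,p_N)$, $\Omega\subset\mathbb{R}^N$ a bounded domain of class $C^{2,\beta}$ with $|\Omega|=1$, and let $(\alpha_n,\psi_n)$ be a sequence of variational solutions of $(\mathbf{P}_{\lambda_n})$ with $\lambda_n\to+\infty$ and $|\alpha_n|\to+\infty$. Then there is $C_2>0$ with $\int_\Omega[\alpha_n+\lambda_n\psi_n]_+^{p+1}\le C_2|\alpha_n|$, and in particular $$\limsup_{n\to+\infty}|\alpha_n|^{-1}\int_\Omega[\alpha_n+\lambda_n\psi_n]_+^{p+1}\le\frac{p+1}{p-1}.$$
   Context: $p_N=+\infty$ if $N=2$ and $p_N=\frac N{N-2}$ if $N\ge3$; $[s]_+=\max\{s,0\}$. Problem $(\mathbf{P}_\lambda)$: find $(\alpha,\psi)\in\mathbb{R}\times C^{2,\beta}(\overline\Omega)$ with $-\Delta\psi=[\alpha+\lambda\psi]_+^p$ in $\Omega$, $\psi=0$ on $\partial\Omega$, $\int_\Omega[\alpha+\lambda\psi]_+^p=1$. Variational solutions: let $G$ be the Dirichlet Green function of $\Omega$, $G[\rho](x)=\int_\Omega G(x,y)\rho(y)dy$, $\mathcal{P}=\{\rho\in L^{1+1/p}(\Omega):\int_\Omega\rho=1,\ \rho\ge0\}$ and $\mathcal{F}_\lambda(\rho)=\frac p{p+1}\int_\Omega\rho^{1+1/p}-\frac\lambda2\int_\Omega\rho G[\rho]$. A solution $(\alpha_\lambda,\psi_\lambda)$ of $(\mathbf{P}_\lambda)$ is variational if $\rho_\lambda=[\alpha_\lambda+\lambda\psi_\lambda]_+^p$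 minimizes $\mathcal{F}_\lambda$ on $\mathcal{P}$, $\psi_\lambda=G[\rho_\lambda]$, and $\alpha_\lambda$ is the associated Lagrange multiplier of the mass constraint. *)

theory Defs
  imports "HOL-Analysis.Analysis"
begin

definition pospart :: "real \<Rightarrow> real" where
  "pospart s = max s 0"

definition hoelder_on :: "real \<Rightarrow> ('a::metric_space) set \<Rightarrow> ('a \<Rightarrow> real) \<Rightarrow> bool" where
  "hoelder_on b S f \<longleftrightarrow> (\<exists>L. \<forall>x\<in>S. \<forall>y\<in>S. \<bar>f x - f y\<bar> \<le> L * dist x y powr b)"

definition C2_with :: "(real^'n) set \<Rightarrow> (real^'n \<Rightarrow> real) \<Rightarrow> ('n \<Rightarrow> real^'n \<Rightarrow> real)
      \<Rightarrow> ('n \<Rightarrow> 'n \<Rightarrow> real^'n \<Rightarrow> real) \<Rightarrow> bool" where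
  "C2_with U f D D2 \<longleftrightarrow>
     (\<forall>x\<in>U. (f has_derivative (\<lambda>h. \<Sum>i\<in>UNIV. D i x * h $ i)) (at x)) \<and>
     (\<forall>i. \<forall>x\<in>U. (D i has_derivative (\<lambda>h. \<Sum>j\<in>UNIV. D2 i j x * h $ j)) (at x)) \<and>
     (\<forall>i j. continuous_on U (D2 i j))"

definition has_laplacian_on :: "(real^'n) set \<Rightarrow> (real^'n \<Rightarrow> real) \<Rightarrow> (real^'n \<Rightarrow> real) \<Rightarrow> bool" where
  "has_laplacian_on U f L \<longleftrightarrow>
     (\<exists>D D2. C2_with U f D D2 \<and> (\<forall>x\<in>U. L x = (\<Sum>i\<in>UNIV. D2 i i x)))"

definition C2b_closure :: "real \<Rightarrow> (real^'n) set \<Rightarrow> (real^'n \<Rightarrow> real) \<Rightarrow> bool" where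
  "C2b_closure b U f \<longleftrightarrow>
     (\<exists>D D2. C2_with U f D D2 \<and>
        continuous_on (closure U) f \<and> bounded (f ` U) \<and>
        (\<forall>i. continuous_on (closure U) (D i) \<and> bounded (D i ` U)) \<and>
        (\<forall>i j. continuous_on (closure U) (D2 i j) \<and> bounded (D2 i j ` U) \<and>
               hoelder_on b U (D2 i j)))"

text \<open>Bounded domain of class C^{2,b}: open, connected, bounded, and near every
  boundary point, after an orthogonal change of coordinates, the domain is the
  subgraph of a C^{2,b} function of the remaining N-1 coordinates.\<close>
definition C2b_domain :: "real \<Rightarrow> (real^'n) set \<Rightarrow> bool" where
  "C2b_domain b \<Omega> \<longleftrightarrow> open \<Omega> \<and> connected \<Omega> \<and> \<Omega> \<noteq> {} \<and> bounded \<Omega> \<and>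
     (\<forall>x0\<in>frontier \<Omega>. \<exists>r>0. \<exists>(T::real^'n \<Rightarrow> real^'n) k g.
        orthogonal_transformation T \<and>
        (\<forall>y z. (\<forall>i. i \<noteq> k \<longrightarrow> y $ i = z $ i) \<longrightarrow> g y = g z) \<and>
        C2b_closure b (T ` ball x0 r) g \<and>
        \<Omega> \<inter> ball x0 r = {x \<in> ball x0 r. (T x) $ k < g (T x)})"

text \<open>Fundamental solution of -Laplace in R^N, N = CARD('n).\<close>
definition fund_sol :: "real^'n \<Rightarrow> real" where
  "fund_sol z = (if CARD('n) = 2 then - ln (norm z) / (2 * pi)
     else norm z powr (2 - real CARD('n)) /
          (real CARD('n) * (real CARD('n) - 2) * measure lborel (ball (0::real^'n) 1)))"

definition dirichlet_green :: "(real^'n) set \<Rightarrow> (real^'n \<Rightarrow> real^'n \<Rightarrow> real) \<Rightarrow> bool" where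
  "dirichlet_green \<Omega> G \<longleftrightarrow>
     (\<forall>x\<in>\<Omega>. \<exists>H. has_laplacian_on \<Omega> H (\<lambda>_. 0) \<and> continuous_on (closure \<Omega>) H \<and>
        (\<forall>y\<in>frontier \<Omega>. H y = fund_sol (x - y)) \<and>
        (\<forall>y\<in>closure \<Omega>. G x y = fund_sol (x - y) - H y))"

definition green_op :: "(real^'n) set \<Rightarrow> (real^'n \<Rightarrow> real^'n \<Rightarrow> real) \<Rightarrow> (real^'n \<Rightarrow> real) \<Rightarrow> real^'n \<Rightarrow> real" where
  "green_op \<Omega> G \<rho> x = (LINT y:\<Omega>|lborel. G x y * \<rho> y)"

definition admissible :: "(real^'n) set \<Rightarrow> real \<Rightarrow> (real^'n \<Rightarrow> real) \<Rightarrow> bool" where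
  "admissible \<Omega> p \<rho> \<longleftrightarrow> \<rho> \<in> borel_measurable lborel \<and> (\<forall>x\<in>\<Omega>. 0 \<le> \<rho> x) \<and>
     set_integrable lborel \<Omega> (\<lambda>x. \<bar>\<rho> x\<bar> powr (1 + 1/p)) \<and>
     (LINT x:\<Omega>|lborel. \<rho> x) = 1"

definition energy :: "(real^'n) set \<Rightarrow> (real^'n \<Rightarrow> real^'n \<Rightarrow> real) \<Rightarrow> real \<Rightarrow> real \<Rightarrow> (real^'n \<Rightarrow> real) \<Rightarrow> real" where
  "energy \<Omega> G p lam \<rho> = p / (p + 1) * (LINT x:\<Omega>|lborel. \<bar>\<rho> x\<bar> powr (1 + 1/p))
      - lam / 2 * (LINT x:\<Omega>|lborel. \<rho> x * green_op \<Omega> G \<rho> x)"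

definition solves_P :: "real \<Rightarrow> (real^'n) set \<Rightarrow> real \<Rightarrow> real \<Rightarrow> real \<Rightarrow> (real^'n \<Rightarrow> real) \<Rightarrow> bool" where
  "solves_P b \<Omega> p lam \<alpha> \<psi> \<longleftrightarrow>
     C2b_closure b \<Omega> \<psi> \<and>
     has_laplacian_on \<Omega> \<psi> (\<lambda>x. - (pospart (\<alpha> + lam * \<psi> x) powr p)) \<and>
     (\<forall>x\<in>frontier \<Omega>. \<psi> x = 0) \<and>
     (LINT x:\<Omega>|lborel. pospart (\<alpha> + lam * \<psi> x) powr p) = 1"

text \<open>Variational solution: a solution whose density rho = [alpha + lam psi]_+^p minimizes
  F_lambda over the admissible set and satisfies psi = G[rho] (so alpha is the
  Lagrange multiplier of the mass constraint in the Euler-Lagrange equation).\<close>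
definition variational_solution :: "real \<Rightarrow> (real^'n) set \<Rightarrow> (real^'n \<Rightarrow> real^'n \<Rightarrow> real) \<Rightarrow> real \<Rightarrow> real
      \<Rightarrow> real \<Rightarrow> (real^'n \<Rightarrow> real) \<Rightarrow> bool" where
  "variational_solution b \<Omega> G p lam \<alpha> \<psi> \<longleftrightarrow>
     solves_P b \<Omega> p lam \<alpha> \<psi> \<and>
     (let \<rho> = (\<lambda>x. pospart (\<alpha> + lam * \<psi> x) powr p) in
        admissible \<Omega> p \<rho> \<and>
        (\<forall>\<sigma>. admissible \<Omega> p \<sigma> \<longrightarrow> energy \<Omega> G p lam \<rho> \<le> energy \<Omega> G p lam \<sigma>) \<and>
        (\<forall>x\<in>\<Omega>. \<psi> x = green_op \<Omega> G \<rho> x))"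

end

theory Submission
  imports Defs
begin

(* Write rho_n = [alpha_n + lambda_n psi_n]_+^p and I_n = int [alpha_n + lambda_n psi_n]_+^(p+1).
   Since int rho_n = 1 we have I_n = alpha_n + lambda_n int rho_n psi_n, and since psi_n = G[rho_n]
   the energy is F(rho_n) = p/(p+1) I_n - lambda_n/2 int rho_n psi_n.  Testing the minimality of
   rho_n against the fixed competitor rho_0, whose interaction term int rho_0 psi_0 is nonnegative
   because psi_0 >= 0 by the minimum principle, gives (p-1) I_n <= 2p I_0 - (p+1) alpha_n as soon
   as lambda_n >= 0.  Both claims follow as |alpha_n| -> oo. *)

lemma second_derivative_nonneg_at_local_min:
  fixes k k' k'' :: "real \<Rightarrow> real"
  assumes "0 < d"
    and k': "\<And>t. \<bar>t\<bar> < d \<Longrightarrow> (k has_real_derivative k' t) (at t)"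
    and k'': "\<And>t. \<bar>t\<bar> < d \<Longrightarrow> (k' has_real_derivative k'' t) (at t)"
    and cont: "isCont k'' 0"
    and min: "\<And>t. \<bar>t\<bar> < d \<Longrightarrow> k 0 \<le> k t"
  shows "0 \<le> k'' 0"
proof (rule ccontr)
  assume "\<not> 0 \<le> k'' 0"
  then have "\<forall>\<^sub>F t in nhds 0. k'' t < 0"
    using cont by (simp add: isCont_def tendsto_at_iff_tendsto_nhds order_tendstoD(2))
  then obtain e where "0 < e" and neg: "\<And>t. \<bar>t\<bar> < e \<Longrightarrow> k'' t < 0"
    unfolding eventually_nhds_metric dist_real_def by auto
  define d' where "d' = min d e"
  have "0 < d'" using \<open>0 < d\<close> \<open>0 < e\<close> by (simp add: d'_def)
  have "k' 0 = 0"
    by (rule DERIV_local_min[OF k'[of 0] \<open>0 < d\<close>]) (use \<open>0 < d\<close> min in auto)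
  have k'_neg: "k' s < 0" if "0 < s" "s < d'" for s
  proof -
    have "k' s < k' 0"
    proof (rule DERIV_neg_imp_decreasing[OF \<open>0 < s\<close>])
      fix r assume "0 \<le> r" "r \<le> s"
      with that show "\<exists>y. (k' has_real_derivative y) (at r) \<and> y < 0"
        using k'' neg by (intro exI[of _ "k'' r"]) (auto simp: d'_def)
    qed
    with \<open>k' 0 = 0\<close> show ?thesis by simp
  qed
  define t where "t = d' / 2"
  have "0 < t" "t < d'" using \<open>0 < d'\<close> by (auto simp: t_def)
  obtain z where "0 < z" "z < t" and mvt: "k t - k 0 = (t - 0) * k' z"
    using MVT2[OF \<open>0 < t\<close>, of k k'] k' \<open>t < d'\<close> by (fastforce simp: d'_def)
  have "t * k' z < 0"
    using k'_neg[of z] \<open>0 < z\<close> \<open>z < t\<close> \<open>t < d'\<close> \<open>0 < t\<close> by (simp add: mult_pos_neg)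
  with mvt have "k t < k 0" by simp
  with min[of t] \<open>0 < t\<close> \<open>t < d'\<close> show False by (auto simp: d'_def)
qed

lemma has_real_derivative_along_axis:
  fixes g :: "real^'n \<Rightarrow> real"
  assumes "(g has_derivative (\<lambda>h. \<Sum>j\<in>UNIV. F j * h $ j)) (at (x + t *\<^sub>R axis i 1))"
  shows "((\<lambda>s. g (x + s *\<^sub>R axis i 1)) has_real_derivative F i) (at t)"
proof -
  have "((\<lambda>s. x + s *\<^sub>R axis i 1) has_derivative (\<lambda>h. h *\<^sub>R axis i 1)) (at t)"
    by (auto intro!: derivative_eq_intros)
  from has_derivative_compose[OF this assms]
  have "((\<lambda>s. g (x + s *\<^sub>R axis i 1)) has_derivative (\<lambda>h. \<Sum>j\<in>UNIV. F j * (h *\<^sub>R axis i 1) $ j)) (at t)"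
    by (simp add: o_def)
  moreover have "(\<lambda>h. \<Sum>j\<in>UNIV. F j * (h *\<^sub>R axis i 1) $ j) = (\<lambda>h. F i * h)"
    by (auto simp: axis_def if_distrib cong: if_cong)
  ultimately show ?thesis by (simp add: has_field_derivative_def)
qed

lemma C2_with_local_min_imp_second_partial_nonneg:
  fixes f :: "real^'n \<Rightarrow> real"
  assumes C2: "C2_with U f D D2" and "open U" "x \<in> U"
    and min: "\<forall>\<^sub>F y in at x. f x \<le> f y"
  shows "0 \<le> D2 i i x"
proof -
  have "\<forall>\<^sub>F y in nhds x. y \<in> U \<and> f x \<le> f y"
    using eventually_conj[OF eventually_nhds_in_open[OF \<open>open U\<close> \<open>x \<in> U\<close>]
        min[unfolded eventually_at_filter]]
    by eventually_elim auto
  then obtain d where "0 < d" and ball: "\<And>y. dist y x < d \<Longrightarrow> y \<in> U \<and> f x \<le> f y"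
    unfolding eventually_nhds_metric by blast
  define y where "y t = x + t *\<^sub>R axis i (1::real)" for t
  have y_in: "y t \<in> U \<and> f x \<le> f (y t)" if "\<bar>t\<bar> < d" for t
    using ball[of "y t"] that by (simp add: y_def dist_norm)
  have "isCont (D2 i i) (y 0)"
    using C2 \<open>open U\<close> \<open>x \<in> U\<close> by (simp add: C2_with_def y_def continuous_on_eq_continuous_at)
  then have "isCont (\<lambda>t. D2 i i (y t)) 0"
    by (rule isCont_o2[rotated]) (simp add: y_def)
  moreover have "((\<lambda>t. f (y t)) has_real_derivative D i (y t)) (at t)"
    and "((\<lambda>t. D i (y t)) has_real_derivative D2 i i (y t)) (at t)" if "\<bar>t\<bar> < d" for t
    using C2 y_in[OF that] unfolding C2_with_def y_def
    by (auto intro: has_real_derivative_along_axis[where F = "\<lambda>j. D j (x + t *\<^sub>R axis i 1)"]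
        has_real_derivative_along_axis[where F = "\<lambda>j. D2 i j (x + t *\<^sub>R axis i 1)"])
  moreover have "f (y 0) \<le> f (y t)" if "\<bar>t\<bar> < d" for t
    using y_in[OF that] by (simp add: y_def)
  ultimately have "0 \<le> D2 i i (y 0)"
    by (intro second_derivative_nonneg_at_local_min[OF \<open>0 < d\<close>, where k = "\<lambda>t. f (y t)"])
  then show ?thesis by (simp add: y_def)
qed

lemma C2_with_diff_scaled_norm_sq:
  fixes f :: "real^'n \<Rightarrow> real"
  assumes "C2_with U f D D2"
  shows "C2_with U (\<lambda>y. f y - c * (norm y)\<^sup>2) (\<lambda>i y. D i y - 2 * c * y $ i)
           (\<lambda>i j y. D2 i j y - (if i = j then 2 * c else 0))"
proof -
  have "((\<lambda>y. f y - c * (norm y)\<^sup>2) has_derivative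
          (\<lambda>h. \<Sum>i\<in>UNIV. (D i y - 2 * c * y $ i) * h $ i)) (at y)" if "y \<in> U" for y
    using assms that unfolding C2_with_def
    by (auto intro!: derivative_eq_intros
        simp: inner_vec_def algebra_simps sum_subtractf sum_distrib_left)
  moreover have "((\<lambda>y. D i y - 2 * c * y $ i) has_derivative
          (\<lambda>h. \<Sum>j\<in>UNIV. (D2 i j y - (if i = j then 2 * c else 0)) * h $ j)) (at y)"
    if "y \<in> U" for i y
  proof -
    have "(\<lambda>h. \<Sum>j\<in>UNIV. (D2 i j y - (if i = j then 2 * c else 0)) * h $ j)
        = (\<lambda>h. (\<Sum>j\<in>UNIV. D2 i j y * h $ j) - 2 * c * h $ i)"
      by (simp add: left_diff_distrib sum_subtractf if_distrib[of "\<lambda>a. a * _"] cong: if_cong)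
    then show ?thesis
      using assms that unfolding C2_with_def
      by (auto intro!: derivative_eq_intros bounded_linear_vec_nth[THEN bounded_linear.has_derivative])
  qed
  moreover have "continuous_on U (\<lambda>y. D2 i j y - (if i = j then 2 * c else 0))" for i j
    using assms unfolding C2_with_def by (simp add: continuous_on_diff)
  ultimately show ?thesis unfolding C2_with_def by blast
qed

lemma superharmonic_min_principle:
  fixes u :: "real^'n \<Rightarrow> real"
  assumes "open \<Omega>" "bounded \<Omega>"
    and cont: "continuous_on (closure \<Omega>) u"
    and boundary: "\<And>x. x \<in> frontier \<Omega> \<Longrightarrow> 0 \<le> u x"
    and C2: "C2_with \<Omega> u D D2"
    and superharmonic: "\<And>x. x \<in> \<Omega> \<Longrightarrow> (\<Sum>i\<in>UNIV. D2 i i x) \<le> 0"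
    and "x0 \<in> \<Omega>"
  shows "0 \<le> u x0"
proof (rule ccontr)
  assume "\<not> 0 \<le> u x0"
  \<comment> \<open>Subtracting \<open>\<epsilon> |y|\<^sup>2\<close> makes the Laplacian strictly negative, which is impossible at an
    interior minimum; \<open>\<epsilon>\<close> is so small that the minimum over the closure is not on the frontier.\<close>
  obtain R where R: "\<And>y. y \<in> closure \<Omega> \<Longrightarrow> norm y \<le> R"
    using bounded_closure[OF \<open>bounded \<Omega>\<close>] unfolding bounded_iff by blast
  define \<epsilon> where "\<epsilon> = - u x0 / (R\<^sup>2 + 1)"
  have "0 < \<epsilon>" "\<epsilon> * R\<^sup>2 < - u x0"
    using \<open>\<not> 0 \<le> u x0\<close> by (auto simp: \<epsilon>_def field_simps add_pos_nonneg)
  define w where "w y = u y - \<epsilon> * (norm y)\<^sup>2" for y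
  have "continuous_on (closure \<Omega>) w"
    unfolding w_def by (intro continuous_intros cont)
  then obtain xm where "xm \<in> closure \<Omega>" and xm_min: "\<And>y. y \<in> closure \<Omega> \<Longrightarrow> w xm \<le> w y"
    using continuous_attains_inf[of "closure \<Omega>" w] \<open>bounded \<Omega>\<close> \<open>x0 \<in> \<Omega>\<close> by auto
  have "xm \<notin> frontier \<Omega>"
  proof
    assume "xm \<in> frontier \<Omega>"
    moreover have "\<epsilon> * (norm xm)\<^sup>2 \<le> \<epsilon> * R\<^sup>2"
      using R[OF \<open>xm \<in> closure \<Omega>\<close>] \<open>0 < \<epsilon>\<close> by (intro mult_left_mono power_mono) auto
    ultimately have "- (\<epsilon> * R\<^sup>2) \<le> w xm"
      using boundary[of xm] by (simp add: w_def)
    moreover have "w xm \<le> w x0" "w x0 \<le> u x0"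
      using xm_min \<open>x0 \<in> \<Omega>\<close> closure_subset \<open>0 < \<epsilon>\<close> by (auto simp: w_def)
    ultimately show False using \<open>\<epsilon> * R\<^sup>2 < - u x0\<close> by linarith
  qed
  with \<open>xm \<in> closure \<Omega>\<close> have "xm \<in> \<Omega>"
    using \<open>open \<Omega>\<close> by (simp add: frontier_def interior_open)
  have "\<forall>\<^sub>F y in at xm. w xm \<le> w y"
    using eventually_nhds_in_open[OF \<open>open \<Omega>\<close> \<open>xm \<in> \<Omega>\<close>] xm_min closure_subset
    by (auto simp: eventually_at_filter elim!: eventually_mono)
  then have "2 * \<epsilon> \<le> D2 i i xm" for i
    using C2_with_local_min_imp_second_partial_nonneg[OF C2_with_diff_scaled_norm_sq[OF C2]
        \<open>open \<Omega>\<close> \<open>xm \<in> \<Omega>\<close>, of \<epsilon>] unfolding w_def by simp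
  then have "(\<Sum>i\<in>(UNIV::'n set). 2 * \<epsilon>) \<le> (\<Sum>i\<in>UNIV. D2 i i xm)"
    by (intro sum_mono)
  moreover have "0 < (\<Sum>i\<in>(UNIV::'n set). 2 * \<epsilon>)"
    using \<open>0 < \<epsilon>\<close> by simp
  ultimately show False
    using superharmonic[OF \<open>xm \<in> \<Omega>\<close>] by linarith
qed

lemma pospart_powr_add_one: "pospart s powr (p + 1) = pospart s powr p * s"
  by (cases "0 < s") (simp_all add: pospart_def powr_add)

lemma abs_pospart_powr_powr:
  assumes "p \<noteq> 0"
  shows "\<bar>pospart s powr p\<bar> powr (1 + 1 / p) = pospart s powr (p + 1)"
proof -
  have "p * (1 + 1 / p) = p + 1" using assms by (simp add: field_simps)
  then show ?thesis by (simp add: powr_powr)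
qed

lemma solves_P_nonneg:
  assumes "open \<Omega>" "bounded \<Omega>" "solves_P b \<Omega> p lam \<alpha> \<psi>" "x \<in> \<Omega>"
  shows "0 \<le> \<psi> x"
proof -
  obtain D D2 where C2: "C2_with \<Omega> \<psi> D D2"
    and lap: "\<And>x. x \<in> \<Omega> \<Longrightarrow> (\<Sum>i\<in>UNIV. D2 i i x) = - (pospart (\<alpha> + lam * \<psi> x) powr p)"
    using assms(3) unfolding solves_P_def has_laplacian_on_def by metis
  show ?thesis
  proof (rule superharmonic_min_principle[OF assms(1,2) _ _ C2 _ assms(4)])
    show "continuous_on (closure \<Omega>) \<psi>" and "\<And>x. x \<in> frontier \<Omega> \<Longrightarrow> 0 \<le> \<psi> x"
      using assms(3) unfolding solves_P_def C2b_closure_def by auto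
    show "\<And>x. x \<in> \<Omega> \<Longrightarrow> (\<Sum>i\<in>UNIV. D2 i i x) \<le> 0"
      using lap by simp
  qed
qed

lemma solves_P_density_integrable:
  assumes "solves_P b \<Omega> p lam \<alpha> \<psi>"
  shows "set_integrable lborel \<Omega> (\<lambda>x. pospart (\<alpha> + lam * \<psi> x) powr p)"
proof (rule ccontr)
  assume "\<not> ?thesis"
  \<comment> \<open>The Bochner integral of a non-integrable function is 0, contradicting unit mass.\<close>
  then have "(LINT x:\<Omega>|lborel. pospart (\<alpha> + lam * \<psi> x) powr p) = 0"
    unfolding set_integrable_def set_lebesgue_integral_def by (rule not_integrable_integral_eq)
  with assms show False unfolding solves_P_def by simp
qed

lemma solves_P_density_mult_integrable:
  assumes "open \<Omega>" "0 < p" and sol: "solves_P b \<Omega> p lam \<alpha> \<psi>"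
  shows "set_integrable lborel \<Omega> (\<lambda>x. pospart (\<alpha> + lam * \<psi> x) powr p * \<psi> x)"
proof -
  have "continuous_on (closure \<Omega>) \<psi>" and "bounded (\<psi> ` \<Omega>)"
    using sol unfolding solves_P_def C2b_closure_def by auto
  then obtain B where B: "\<And>x. x \<in> \<Omega> \<Longrightarrow> \<bar>\<psi> x\<bar> \<le> B"
    unfolding bounded_iff by auto
  have "continuous_on \<Omega> \<psi>"
    using \<open>continuous_on (closure \<Omega>) \<psi>\<close> closure_subset continuous_on_subset by blast
  then have "continuous_on \<Omega> (\<lambda>x. pospart (\<alpha> + lam * \<psi> x))"
    unfolding pospart_def by (intro continuous_intros)
  then have "continuous_on \<Omega> (\<lambda>x. pospart (\<alpha> + lam * \<psi> x) powr p)"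
    by (rule continuous_on_powr'[OF _ continuous_on_const]) (simp add: \<open>0 < p\<close> pospart_def)
  then have cont: "continuous_on \<Omega> (\<lambda>x. pospart (\<alpha> + lam * \<psi> x) powr p * \<psi> x)"
    using \<open>continuous_on \<Omega> \<psi>\<close> by (rule continuous_on_mult)
  show ?thesis
  proof (rule set_integrable_bound)
    show "set_integrable lborel \<Omega> (\<lambda>x. B * pospart (\<alpha> + lam * \<psi> x) powr p)"
      using solves_P_density_integrable[OF sol] by (rule set_integrable_mult_right)
    show "set_borel_measurable lborel \<Omega> (\<lambda>x. pospart (\<alpha> + lam * \<psi> x) powr p * \<psi> x)"
      using borel_measurable_continuous_on_indicator[OF borel_open[OF \<open>open \<Omega>\<close>] cont]
      unfolding set_borel_measurable_def by simp
    show "AE x in lborel. x \<in> \<Omega> \<longrightarrow>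
        norm (pospart (\<alpha> + lam * \<psi> x) powr p * \<psi> x) \<le> norm (B * pospart (\<alpha> + lam * \<psi> x) powr p)"
    proof (intro AE_I2 impI)
      fix x assume "x \<in> \<Omega>"
      have "norm (pospart (\<alpha> + lam * \<psi> x) powr p * \<psi> x) = pospart (\<alpha> + lam * \<psi> x) powr p * \<bar>\<psi> x\<bar>"
        by (simp add: abs_mult)
      also have "\<dots> \<le> pospart (\<alpha> + lam * \<psi> x) powr p * B"
        using B[OF \<open>x \<in> \<Omega>\<close>] by (intro mult_left_mono) simp_all
      also have "\<dots> \<le> norm (B * pospart (\<alpha> + lam * \<psi> x) powr p)"
        by (simp add: mult.commute)
      finally show "norm (pospart (\<alpha> + lam * \<psi> x) powr p * \<psi> x) \<le> norm (B * pospart (\<alpha> + lam * \<psi> x) powr p)" .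
    qed
  qed
qed

lemma solves_P_pospart_integral:
  assumes "open \<Omega>" "0 < p" and sol: "solves_P b \<Omega> p lam \<alpha> \<psi>"
  shows "(LINT x:\<Omega>|lborel. pospart (\<alpha> + lam * \<psi> x) powr (p + 1))
       = \<alpha> + lam * (LINT x:\<Omega>|lborel. pospart (\<alpha> + lam * \<psi> x) powr p * \<psi> x)"
proof -
  let ?\<rho> = "\<lambda>x. pospart (\<alpha> + lam * \<psi> x) powr p"
  have "(LINT x:\<Omega>|lborel. pospart (\<alpha> + lam * \<psi> x) powr (p + 1))
      = (LINT x:\<Omega>|lborel. \<alpha> * ?\<rho> x + lam * (?\<rho> x * \<psi> x))"
    unfolding pospart_powr_add_one by (simp add: algebra_simps)
  also have "\<dots> = \<alpha> * (LINT x:\<Omega>|lborel. ?\<rho> x) + lam * (LINT x:\<Omega>|lborel. ?\<rho> x * \<psi> x)"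
    using solves_P_density_integrable[OF sol] solves_P_density_mult_integrable[OF assms]
    by (simp add: set_integral_add set_integrable_mult_right)
  finally show ?thesis
    using sol by (simp add: solves_P_def)
qed

lemma variational_solution_energy:
  assumes "open \<Omega>" "p \<noteq> 0" and var: "variational_solution b \<Omega> G p lam \<alpha> \<psi>"
  shows "energy \<Omega> G p lam' (\<lambda>x. pospart (\<alpha> + lam * \<psi> x) powr p)
       = p / (p + 1) * (LINT x:\<Omega>|lborel. pospart (\<alpha> + lam * \<psi> x) powr (p + 1))
         - lam' / 2 * (LINT x:\<Omega>|lborel. pospart (\<alpha> + lam * \<psi> x) powr p * \<psi> x)"
proof -
  let ?\<rho> = "\<lambda>x. pospart (\<alpha> + lam * \<psi> x) powr p"
  have "\<psi> x = green_op \<Omega> G ?\<rho> x" if "x \<in> \<Omega>" for x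
    using var that unfolding variational_solution_def Let_def by blast
  then have "(LINT x:\<Omega>|lborel. ?\<rho> x * green_op \<Omega> G ?\<rho> x) = (LINT x:\<Omega>|lborel. ?\<rho> x * \<psi> x)"
    using \<open>open \<Omega>\<close> by (intro set_lebesgue_integral_cong) auto
  then show ?thesis
    unfolding energy_def abs_pospart_powr_powr[OF \<open>p \<noteq> 0\<close>] by simp
qed

lemma variational_solution_comparison:
  assumes "open \<Omega>" "bounded \<Omega>" "1 < p" "0 \<le> lam"
    and var: "variational_solution b \<Omega> G p lam \<alpha> \<psi>"
    and var0: "variational_solution b \<Omega> G p lam0 \<alpha>0 \<psi>0"
  shows "(p - 1) * (LINT x:\<Omega>|lborel. pospart (\<alpha> + lam * \<psi> x) powr (p + 1))
       \<le> 2 * p * (LINT x:\<Omega>|lborel. pospart (\<alpha>0 + lam0 * \<psi>0 x) powr (p + 1)) - (p + 1) * \<alpha>"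
proof -
  let ?\<rho> = "\<lambda>x. pospart (\<alpha> + lam * \<psi> x) powr p"
    and ?\<sigma> = "\<lambda>x. pospart (\<alpha>0 + lam0 * \<psi>0 x) powr p"
  define I where "I = (LINT x:\<Omega>|lborel. pospart (\<alpha> + lam * \<psi> x) powr (p + 1))"
  define I0 where "I0 = (LINT x:\<Omega>|lborel. pospart (\<alpha>0 + lam0 * \<psi>0 x) powr (p + 1))"
  define E0 where "E0 = (LINT x:\<Omega>|lborel. ?\<sigma> x * \<psi>0 x)"
  have sol: "solves_P b \<Omega> p lam \<alpha> \<psi>" and sol0: "solves_P b \<Omega> p lam0 \<alpha>0 \<psi>0"
    using var var0 by (simp_all add: variational_solution_def)
  have "energy \<Omega> G p lam ?\<rho> \<le> energy \<Omega> G p lam ?\<sigma>"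
    using var var0 unfolding variational_solution_def Let_def by blast
  moreover have "lam * (LINT x:\<Omega>|lborel. ?\<rho> x * \<psi> x) = I - \<alpha>"
    using solves_P_pospart_integral[OF \<open>open \<Omega>\<close> _ sol] \<open>1 < p\<close> by (simp add: I_def)
  ultimately have "p / (p + 1) * I - (I - \<alpha>) / 2 \<le> p / (p + 1) * I0 - lam / 2 * E0"
    using variational_solution_energy[OF \<open>open \<Omega>\<close> _ var, of lam]
      variational_solution_energy[OF \<open>open \<Omega>\<close> _ var0, of lam] \<open>1 < p\<close>
    by (simp add: I_def I0_def E0_def)
  moreover have "0 \<le> E0"
    unfolding E0_def set_lebesgue_integral_def
    using solves_P_nonneg[OF \<open>open \<Omega>\<close> \<open>bounded \<Omega>\<close> sol0]
    by (intro Bochner_Integration.integral_nonneg) (simp add: indicator_def)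
  moreover have "0 \<le> lam / 2 * E0"
    using \<open>0 \<le> lam\<close> \<open>0 \<le> E0\<close> by simp
  ultimately have "p / (p + 1) * I - (I - \<alpha>) / 2 \<le> p / (p + 1) * I0"
    by linarith
  then have "2 * (p + 1) * (p / (p + 1) * I - (I - \<alpha>) / 2) \<le> 2 * (p + 1) * (p / (p + 1) * I0)"
    using \<open>1 < p\<close> by (intro mult_left_mono) auto
  moreover have "2 * (p + 1) * (p / (p + 1) * I - (I - \<alpha>) / 2) = (p - 1) * I + (p + 1) * \<alpha>"
    and "2 * (p + 1) * (p / (p + 1) * I0) = 2 * p * I0"
    using \<open>1 < p\<close> by (simp_all add: field_simps)
  ultimately have "(p - 1) * I \<le> 2 * p * I0 - (p + 1) * \<alpha>"
    by linarith
  then show ?thesis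
    by (simp only: I_def I0_def)
qed

lemma affine_bound_imp_linear_bound:
  fixes f g :: "'a \<Rightarrow> real"
  assumes bound: "\<forall>\<^sub>F n in F. f n \<le> A + k * g n" and g: "filterlim g at_top F" and "0 \<le> k"
  shows "\<exists>C>0. \<forall>\<^sub>F n in F. f n \<le> C * g n"
proof (intro exI conjI)
  show "0 < k + 1" using \<open>0 \<le> k\<close> by simp
  show "\<forall>\<^sub>F n in F. f n \<le> (k + 1) * g n"
    using bound g[unfolded filterlim_at_top, rule_format, of A]
    by eventually_elim (simp add: algebra_simps)
qed

lemma affine_bound_imp_limsup_ratio_le:
  fixes f g :: "nat \<Rightarrow> real"
  assumes bound: "\<forall>\<^sub>F n in sequentially. f n \<le> A + k * g n"
    and g: "filterlim g at_top sequentially"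
  shows "limsup (\<lambda>n. ereal (f n / g n)) \<le> ereal k"
proof -
  have "\<forall>\<^sub>F n in sequentially. ereal (f n / g n) \<le> ereal (k + A / g n)"
    using bound g[unfolded filterlim_at_top, rule_format, of 1]
  proof eventually_elim
    case (elim n)
    then have "f n / g n \<le> (A + k * g n) / g n"
      by (intro divide_right_mono) auto
    also have "\<dots> = k + A / g n"
      using elim by (simp add: field_simps)
    finally show ?case by simp
  qed
  then have "limsup (\<lambda>n. ereal (f n / g n)) \<le> limsup (\<lambda>n. ereal (k + A / g n))"
    by (rule Limsup_mono)
  also have "\<dots> = ereal k"
  proof (rule lim_imp_Limsup[OF trivial_limit_sequentially])
    have "(\<lambda>n. A / g n) \<longlonglongrightarrow> 0"
      by (rule tendsto_divide_0[OF tendsto_const filterlim_at_top_imp_at_infinity[OF g]])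
    then show "(\<lambda>n. ereal (k + A / g n)) \<longlonglongrightarrow> ereal k"
      using tendsto_add[OF tendsto_const, of _ 0 sequentially k] by (simp add: lim_ereal)
  qed
  finally show ?thesis .
qed

theorem theorem1p22:
  fixes \<Omega> :: "(real^'n) set" and b p :: real and G :: "real^'n \<Rightarrow> real^'n \<Rightarrow> real"
    and lam \<alpha> :: "nat \<Rightarrow> real" and \<psi> :: "nat \<Rightarrow> real^'n \<Rightarrow> real"
  assumes N: "CARD('n) \<ge> 2"
    and p: "1 < p" "CARD('n) \<ge> 3 \<Longrightarrow> p < real CARD('n) / (real CARD('n) - 2)"
    and b: "0 < b" "b < 1"
    and dom: "C2b_domain b \<Omega>"
    and vol: "emeasure lborel \<Omega> = 1"
    and G: "dirichlet_green \<Omega> G"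
    and var: "\<And>n. variational_solution b \<Omega> G p (lam n) (\<alpha> n) (\<psi> n)"
    and lam_inf: "filterlim lam at_top sequentially"
    and alpha_inf: "filterlim (\<lambda>n. \<bar>\<alpha> n\<bar>) at_top sequentially"
  shows "(\<exists>C2>0. \<forall>\<^sub>F n in sequentially.
            (LINT x:\<Omega>|lborel. pospart (\<alpha> n + lam n * \<psi> n x) powr (p + 1)) \<le> C2 * \<bar>\<alpha> n\<bar>)
       \<and> limsup (\<lambda>n. ereal ((LINT x:\<Omega>|lborel. pospart (\<alpha> n + lam n * \<psi> n x) powr (p + 1)) / \<bar>\<alpha> n\<bar>))
           \<le> ereal ((p + 1) / (p - 1))"
proof -
  define I where "I n = (LINT x:\<Omega>|lborel. pospart (\<alpha> n + lam n * \<psi> n x) powr (p + 1))" for n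
  have "open \<Omega>" "bounded \<Omega>"
    using dom by (simp_all add: C2b_domain_def)
  have bound: "\<forall>\<^sub>F n in sequentially. I n \<le> 2 * p * I 0 / (p - 1) + (p + 1) / (p - 1) * \<bar>\<alpha> n\<bar>"
    using lam_inf[unfolded filterlim_at_top, rule_format, of 0]
  proof eventually_elim
    case (elim n)
    have "(p - 1) * I n \<le> 2 * p * I 0 - (p + 1) * \<alpha> n"
      unfolding I_def
      by (rule variational_solution_comparison[OF \<open>open \<Omega>\<close> \<open>bounded \<Omega>\<close> p(1) elim var var])
    also have "\<dots> \<le> 2 * p * I 0 + (p + 1) * \<bar>\<alpha> n\<bar>"
      using mult_left_mono[OF abs_ge_minus_self[of "\<alpha> n"], of "p + 1"] p(1) by simp
    finally have "I n \<le> (2 * p * I 0 + (p + 1) * \<bar>\<alpha> n\<bar>) / (p - 1)"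
      using p(1) by (simp add: pos_le_divide_eq mult.commute)
    then show ?case
      by (simp only: add_divide_distrib[of "2 * p * I 0"] times_divide_eq_left)
  qed
  have "0 \<le> (p + 1) / (p - 1)"
    using p(1) by simp
  then have "(\<exists>C2>0. \<forall>\<^sub>F n in sequentially. I n \<le> C2 * \<bar>\<alpha> n\<bar>)
      \<and> limsup (\<lambda>n. ereal (I n / \<bar>\<alpha> n\<bar>)) \<le> ereal ((p + 1) / (p - 1))"
    using affine_bound_imp_linear_bound[OF bound alpha_inf]
      affine_bound_imp_limsup_ratio_le[OF bound alpha_inf] by blast
  then show ?thesis
    unfolding I_def .
qed

end
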